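(* Let $k,d\in\mathbb{N}$ and $m,n\in\{1,\dots,d\}$. Define $\Delta_{m,n}:\mathbb{R}^{d\times d}\to\mathbb{R}^{d\times d}$ by $[\Delta_{m,n}(X)]_{m',n'}=[X]_{m,n}$ if $(m',n')=(m,n)$ and $0$ otherwise. Then there exist $r\in\mathbb N$ with $r\leq \frac{5}{2}d-1$ and kernels $K^1,\dots,K^r\in\mathbb{R}^{(2k+1)\times(2k+1)}$ (depending on $m,n$) such that for all $X\in[0,1]^{d\times d}$, $$\Delta_{m,n}(X)=K^r*(\cdots*(K^2*(K^1*X))\cdots).$$
   Context: Single-channel zero-padding convolution: for $K\in\mathbb R^{(2k+1)\times(2k+1)}$ with entries $[K]_{s,t}$, $s,t\in\{-k,\dots,k\}$, and $X\in\mathbb R^{d\times d}$, $[K*X]_{m,n}=\sum_{s,t=-k}^k[K]_{s,t}[\iota(X)]_{m+s,n+t}$ for $m,n\in\{1,\dots,d\}$, where $[\iota(X)]_{a,b}=[X]_{a,b}$ if $a,b\in\{1,\dots,d\}$ and $0$ for other $a,b\in\mathbb Z$. *)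

theory Defs
  imports Complex_Main
begin

text \<open>A d x d real matrix is represented as a function int => int => real whose
entries at indices (a,b) with a,b in {1..d} are the matrix entries (other values ignored).
A (2k+1)x(2k+1) kernel is a function int => int => real whose entries at (s,t)
with s,t in {-k..k} are the kernel entries (other values ignored).\<close>

definition iota :: "nat \<Rightarrow> (int \<Rightarrow> int \<Rightarrow> real) \<Rightarrow> int \<Rightarrow> int \<Rightarrow> real" where
  "iota d X a b = (if a \<in> {1..int d} \<and> b \<in> {1..int d} then X a b else 0)"

definition conv :: "nat \<Rightarrow> nat \<Rightarrow> (int \<Rightarrow> int \<Rightarrow> real) \<Rightarrow> (int \<Rightarrow> int \<Rightarrow> real) \<Rightarrow> int \<Rightarrow> int \<Rightarrow> real" where
  "conv k d K X m n =
     (\<Sum>s\<in>{-int k..int k}. \<Sum>t\<in>{-int k..int k}. K s t * iota d X (m + s) (n + t))"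

fun conv_chain :: "nat \<Rightarrow> nat \<Rightarrow> (nat \<Rightarrow> int \<Rightarrow> int \<Rightarrow> real) \<Rightarrow> nat \<Rightarrow> (int \<Rightarrow> int \<Rightarrow> real) \<Rightarrow> int \<Rightarrow> int \<Rightarrow> real" where
  "conv_chain k d Ks 0 X = X"
| "conv_chain k d Ks (Suc r) X = conv k d (Ks (Suc r)) (conv_chain k d Ks r X)"

definition Delta :: "int \<Rightarrow> int \<Rightarrow> (int \<Rightarrow> int \<Rightarrow> real) \<Rightarrow> int \<Rightarrow> int \<Rightarrow> real" where
  "Delta m n X m' n' = (if (m', n') = (m, n) then X m n else 0)"

end

theory Submission
  imports Defs
begin

text \<open>A kernel with a single entry 1 at offset (p,q) translates the zero-padded image by (p,q).
Composing such translations along a closed walk of unit steps returns every entry to its own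
position, but an entry survives only if its translates stay inside the d x d grid at every step.
The walk first moves up by m - 1 rows and back, then down by d - m rows and back (columns
likewise with n); an entry at row a stays inside throughout iff a - (m - 1) \<ge> 1 and
a + (d - m) \<le> d, i.e. iff a = m. The walk has 2d - 1 steps, within the bound 5d/2 - 1.\<close>

definition shift_kernel :: "int \<Rightarrow> int \<Rightarrow> int \<Rightarrow> int \<Rightarrow> real" where
  "shift_kernel p q = (\<lambda>s t. if s = p \<and> t = q then 1 else 0)"

lemma sum_sum_shift_kernel:
  fixes f :: "int \<Rightarrow> int \<Rightarrow> real"
  assumes "finite S" "p \<in> S" "q \<in> S"
  shows "(\<Sum>s\<in>S. \<Sum>t\<in>S. shift_kernel p q s t * f s t) = f p q"
proof -
  have "(\<Sum>s\<in>S. \<Sum>t\<in>S. shift_kernel p q s t * f s t)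
      = (\<Sum>s\<in>S. if s = p then (\<Sum>t\<in>S. if t = q then f s t else 0) else 0)"
    unfolding shift_kernel_def by (rule sum.cong) (auto intro: sum.cong)
  also have "\<dots> = f p q"
    using assms by simp
  finally show ?thesis .
qed

lemma conv_shift_kernel:
  assumes "\<bar>p\<bar> \<le> int k" "\<bar>q\<bar> \<le> int k"
  shows "conv k d (shift_kernel p q) Y x y = iota d Y (x + p) (y + q)"
  unfolding conv_def
  by (rule sum_sum_shift_kernel[where f = "\<lambda>s t. iota d Y (x + s) (y + t)"]) (use assms in auto)

text \<open>The j-th kernel moves the walk from offset (c j, e j) back to (c (j - 1), e (j - 1)):
the output at a + c j reads the input at a + c (j - 1).\<close>
definition walk_kernels :: "(nat \<Rightarrow> int) \<Rightarrow> (nat \<Rightarrow> int) \<Rightarrow> nat \<Rightarrow> int \<Rightarrow> int \<Rightarrow> real" where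
  "walk_kernels c e j = shift_kernel (c (j - 1) - c j) (e (j - 1) - e j)"

lemma conv_chain_walk_kernels:
  fixes c e :: "nat \<Rightarrow> int"
  assumes steps: "\<And>j. \<bar>c j - c (Suc j)\<bar> \<le> int k" "\<And>j. \<bar>e j - e (Suc j)\<bar> \<le> int k"
  shows "conv_chain k d (walk_kernels c e) r X (a + c r) (b + e r)
    = (if \<forall>j<r. a + c j \<in> {1..int d} \<and> b + e j \<in> {1..int d} then X (a + c 0) (b + e 0) else 0)"
proof (induction r)
  case 0
  then show ?case by simp
next
  case (Suc r)
  have "conv_chain k d (walk_kernels c e) (Suc r) X (a + c (Suc r)) (b + e (Suc r))
      = iota d (conv_chain k d (walk_kernels c e) r X) (a + c r) (b + e r)"
    using conv_shift_kernel[OF steps(1)[of r] steps(2)[of r]]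
    by (simp add: walk_kernels_def abs_minus_commute)
  also have "\<dots> = (if \<forall>j<Suc r. a + c j \<in> {1..int d} \<and> b + e j \<in> {1..int d}
                   then X (a + c 0) (b + e 0) else 0)"
    using Suc.IH by (auto simp: iota_def less_Suc_eq)
  finally show ?case .
qed

text \<open>A closed walk of 2A + 2B + 1 unit steps from 0 that dips to -B, climbs to A and returns;
the last step stays at 0.\<close>
definition excursion :: "int \<Rightarrow> int \<Rightarrow> nat \<Rightarrow> int" where
  "excursion A B j =
     (if int j \<le> 2*B then \<bar>int j - B\<bar> - B else max 0 (A - \<bar>int j - (2*B + A)\<bar>))"

lemma excursion_step: "B \<ge> 0 \<Longrightarrow> \<bar>excursion A B j - excursion A B (Suc j)\<bar> \<le> 1"
  unfolding excursion_def by (auto simp: abs_if max_def)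

lemma excursion_0: "B \<ge> 0 \<Longrightarrow> excursion A B 0 = 0"
  unfolding excursion_def by simp

lemma excursion_end: "A \<ge> 0 \<Longrightarrow> B \<ge> 0 \<Longrightarrow> excursion A B (nat (2*A + 2*B + 1)) = 0"
  unfolding excursion_def by simp

lemma excursion_in_interval_iff:
  assumes "A \<ge> 0" "B \<ge> 0"
  shows "(\<forall>j < nat (2*A + 2*B + 1). a + excursion A B j \<in> {lo..hi}) \<longleftrightarrow> lo \<le> a - B \<and> a + A \<le> hi"
proof
  assume inside: "\<forall>j < nat (2*A + 2*B + 1). a + excursion A B j \<in> {lo..hi}"
  have "excursion A B (nat B) = -B" "excursion A B (nat (2*B + A)) = A"
    using assms unfolding excursion_def by auto
  moreover have "nat B < nat (2*A + 2*B + 1)" "nat (2*B + A) < nat (2*A + 2*B + 1)"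
    using assms by auto
  ultimately show "lo \<le> a - B \<and> a + A \<le> hi"
    using inside by (metis atLeastAtMost_iff diff_conv_add_uminus)
next
  assume "lo \<le> a - B \<and> a + A \<le> hi"
  moreover have "-B \<le> excursion A B j \<and> excursion A B j \<le> A" for j
    using assms unfolding excursion_def by auto
  ultimately show "\<forall>j < nat (2*A + 2*B + 1). a + excursion A B j \<in> {lo..hi}"
    by (smt (verit) atLeastAtMost_iff)
qed

theorem lemmaC1:
  fixes k d :: nat and m n :: int
  assumes "k \<ge> 1"
    and "m \<in> {1..int d}" and "n \<in> {1..int d}"
  shows "\<exists>(r::nat) (Ks :: nat \<Rightarrow> int \<Rightarrow> int \<Rightarrow> real).
           1 \<le> r \<and> real r \<le> 5/2 * real d - 1 \<and>
           (\<forall>X :: int \<Rightarrow> int \<Rightarrow> real.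
              (\<forall>a\<in>{1..int d}. \<forall>b\<in>{1..int d}. X a b \<in> {0..1}) \<longrightarrow>
              (\<forall>a\<in>{1..int d}. \<forall>b\<in>{1..int d}.
                 Delta m n X a b = conv_chain k d Ks r X a b))"
proof -
  define r where "r = 2*d - 1"
  define c where "c = excursion (int d - m) (m - 1)"
  define e where "e = excursion (int d - n) (n - 1)"
  have r_eq: "r = nat (2*(int d - m) + 2*(m - 1) + 1)" "r = nat (2*(int d - n) + 2*(n - 1) + 1)"
    using assms unfolding r_def by auto
  have ends: "c 0 = 0" "c r = 0" "e 0 = 0" "e r = 0"
    using assms excursion_end[of "int d - m" "m - 1"] excursion_end[of "int d - n" "n - 1"]
    unfolding c_def e_def r_eq by (auto simp: excursion_0)
  have "\<bar>c j - c (Suc j)\<bar> \<le> int k" "\<bar>e j - e (Suc j)\<bar> \<le> int k" for j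
    using excursion_step[of "m - 1" "int d - m" j] excursion_step[of "n - 1" "int d - n" j] assms
    unfolding c_def e_def by auto
  note chain = conv_chain_walk_kernels[of c k e d r X a b for X a b, OF this]
  have inside_iff: "(\<forall>j<r. a + c j \<in> {1..int d}) \<longleftrightarrow> a = m"
    "(\<forall>j<r. b + e j \<in> {1..int d}) \<longleftrightarrow> b = n" for a b
    using assms excursion_in_interval_iff[of "int d - m" "m - 1" a 1 "int d"]
      excursion_in_interval_iff[of "int d - n" "n - 1" b 1 "int d"]
    unfolding c_def e_def r_eq by auto
  have "Delta m n X a b = conv_chain k d (walk_kernels c e) r X a b" for X a b
    using chain[of X a b] inside_iff unfolding ends by (auto simp: Delta_def)
  moreover have "1 \<le> r" "real r \<le> 5/2 * real d - 1"
    using assms unfolding r_def by (auto simp: of_nat_diff)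
  ultimately show ?thesis
    by blast
qed

end
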